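(* Let $p>1$, let $u\in W^{3,q}(0,1)$ for some $q>1$, let $\kappa_u=u''/(1+(u')^2)^{3/2}$, let $\mathbf{s}(x)=\int_0^x\sqrt{1+u'(\xi)^2}\,d\xi$ with inverse $x(\mathbf{s})$, and set $\tilde\kappa_u(\mathbf{s}):=\kappa_u(x(\mathbf{s}))$. Let $0\le x_1<x_2\le 1$. If $$\int_{x_1}^{x_2}\Bigl[p\frac{|\kappa_u|^{p-2}\kappa_u}{1+(u')^2}\phi''+(1-3p)\frac{|\kappa_u|^pu'}{\sqrt{1+(u')^2}}\phi'\Bigr]dx=0\quad\text{for all }\phi\in C_0^\infty(x_1,x_2),$$ then $$\int_{\mathbf{s}(x_1)}^{\mathbf{s}(x_2)}\bigl[p|\tilde\kappa_u|^{p-2}\tilde\kappa_u\varphi''+(p-1)|\tilde\kappa_u|^p\tilde\kappa_u\varphi\bigr]d\mathbf{s}=0\quad\text{for all }\varphi\in C_0^\infty(\mathbf{s}(x_1),\mathbf{s}(x_2)).$$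
   Context: $\kappa_u$ is the curvature of the graph of $u$, and $\tilde\kappa_u$ is that curvature as a function of the arc length parameter $\mathbf{s}$ of the graph. *)

theory Defs
  imports "HOL-Analysis.Analysis"
begin

text \<open>u in W^{3,q}(0,1), given via its continuous representative: u1, u2 are the
  classical (one-sided at the endpoints) first and second derivatives of u on [0,1],
  and u2 is absolutely continuous with a derivative g in L^q(0,1).\<close>
definition sobolev_W3 :: "real \<Rightarrow> (real \<Rightarrow> real) \<Rightarrow> (real \<Rightarrow> real) \<Rightarrow> (real \<Rightarrow> real) \<Rightarrow> bool" where
  "sobolev_W3 q u u1 u2 \<longleftrightarrow>
     (\<forall>x\<in>{0..1}. (u has_real_derivative u1 x) (at x within {0..1}) \<and>
                 (u1 has_real_derivative u2 x) (at x within {0..1})) \<and>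
     (\<exists>g. set_integrable lborel {0..1} g \<and>
          set_integrable lborel {0..1} (\<lambda>x. \<bar>g x\<bar> powr q) \<and>
          (\<forall>x\<in>{0..1}. u2 x = u2 0 + (LBINT t=0..x. g t)))"

definition test_fun :: "real \<Rightarrow> real \<Rightarrow> (real \<Rightarrow> real) \<Rightarrow> bool" where
  "test_fun a b \<phi> \<longleftrightarrow>
     (\<forall>n x. ((deriv ^^ n) \<phi>) differentiable (at x)) \<and>
     (\<exists>c d. a < c \<and> c \<le> d \<and> d < b \<and> (\<forall>x. x \<notin> {c..d} \<longrightarrow> \<phi> x = 0))"

definition curv :: "(real \<Rightarrow> real) \<Rightarrow> (real \<Rightarrow> real) \<Rightarrow> real \<Rightarrow> real" where
  "curv u1 u2 x = u2 x / (1 + (u1 x)\<^sup>2) powr (3/2)"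

definition arclen :: "(real \<Rightarrow> real) \<Rightarrow> real \<Rightarrow> real" where
  "arclen u1 x = integral {0..x} (\<lambda>\<xi>. sqrt (1 + (u1 \<xi>)\<^sup>2))"

definition curv_s :: "(real \<Rightarrow> real) \<Rightarrow> (real \<Rightarrow> real) \<Rightarrow> real \<Rightarrow> real" where
  "curv_s u1 u2 s = curv u1 u2 (the_inv_into {0..1} (arclen u1) s)"

end

theory Submission
  imports Defs "HOL-Computational_Algebra.Polynomial"
begin

text \<open>
  The hypothesis is a weak equation \<integral> (A \<phi>'' + B \<phi>') = 0 with continuous coefficients
  A = p |\<kappa>|^(p-2) \<kappa> / (1 + u'^2) and B. Integrating B once and applying the lemma of
  du Bois-Reymond twice shows that A is C^1 with A' = B + \<beta> for a constant \<beta>.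
  With w = sqrt (1 + u'^2) and d/ds = w^(-1) d/dx, a pointwise computation then gives
  d/ds (p |\<kappa>|^(p-2) \<kappa>) = D for D = \<beta> w + (1 - p) |\<kappa>|^p u', and d/ds D = (1 - p) |\<kappa>|^p \<kappa>.
  Hence p |\<kappa>|^(p-2) \<kappa> solves the equation in arc length classically, and two integrations
  by parts against a test function give its weak form.
\<close>

section \<open>Smooth functions and test functions\<close>

definition smooth :: "(real \<Rightarrow> real) \<Rightarrow> bool" where
  "smooth f \<longleftrightarrow> (\<forall>n x. (deriv ^^ n) f differentiable (at x))"

lemma smooth_imp_differentiable: "smooth f \<Longrightarrow> f differentiable (at x)"
  unfolding smooth_def by (metis funpow_0)

lemma smooth_imp_DERIV: "smooth f \<Longrightarrow> (f has_real_derivative deriv f x) (at x)"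
  unfolding smooth_def by (metis funpow_0 DERIV_deriv_iff_real_differentiable)

lemma smooth_imp_field_differentiable: "smooth f \<Longrightarrow> f field_differentiable (at x)"
  using smooth_imp_DERIV field_differentiable_def by blast

lemma smooth_deriv: "smooth f \<Longrightarrow> smooth (deriv f)"
  unfolding smooth_def by (metis comp_apply funpow_Suc_right)

lemma smooth_imp_continuous_on: "smooth f \<Longrightarrow> continuous_on S f"
  by (meson DERIV_isCont continuous_at_imp_continuous_on smooth_imp_DERIV)

lemma smooth_if_DERIV:
  assumes "\<And>x. (F has_real_derivative f x) (at x)" "smooth f"
  shows "smooth F"
  unfolding smooth_def
proof (intro allI)
  fix n x
  show "(deriv ^^ n) F differentiable at x"
  proof (cases n)
    case 0
    then show ?thesis using assms(1) real_differentiable_def by auto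
  next
    case (Suc m)
    have "deriv F = f" using assms(1) DERIV_imp_deriv by blast
    then have "(deriv ^^ n) F = (deriv ^^ m) f"
      using Suc by (metis comp_apply funpow_Suc_right)
    then show ?thesis using assms(2) smooth_def by auto
  qed
qed

lemma deriv_funpow_add:
  fixes f g :: "real \<Rightarrow> real"
  assumes "\<And>k x. k < n \<Longrightarrow> (deriv ^^ k) f differentiable (at x)"
    and "\<And>k x. k < n \<Longrightarrow> (deriv ^^ k) g differentiable (at x)"
  shows "(deriv ^^ n) (\<lambda>x. f x + g x) = (\<lambda>x. (deriv ^^ n) f x + (deriv ^^ n) g x)"
  using assms
proof (induction n)
  case (Suc n)
  have "(deriv ^^ n) f field_differentiable (at x)" "(deriv ^^ n) g field_differentiable (at x)" for x
    using Suc.prems[of n x] by (simp_all add: field_differentiable_def real_differentiable_def)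
  then show ?case
    using Suc by simp
qed simp

lemma smooth_add: "smooth f \<Longrightarrow> smooth g \<Longrightarrow> smooth (\<lambda>x. f x + g x)"
  unfolding smooth_def by (subst deriv_funpow_add) (auto intro!: differentiable_add)

lemma smooth_const: "smooth (\<lambda>_. c)"
proof -
  have "(deriv ^^ Suc n) (\<lambda>_. c) = (\<lambda>_. 0)" for n
    by (induction n) auto
  then show ?thesis
    unfolding smooth_def by (metis differentiable_const funpow_0 not0_implies_Suc)
qed

lemma smooth_mult:
  assumes "smooth f" "smooth g"
  shows "smooth (\<lambda>x. f x * g x)"
proof -
  have "\<forall>f g. smooth f \<longrightarrow> smooth g \<longrightarrow> (\<forall>x. (deriv ^^ n) (\<lambda>x. f x * g x) differentiable (at x))"
    for n
  proof (induction n rule: less_induct)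
    case (less n)
    show ?case
    proof (intro allI impI)
      fix f g x
      assume f: "smooth f" and g: "smooth g"
      show "(deriv ^^ n) (\<lambda>x. f x * g x) differentiable at x"
      proof (cases n)
        case 0
        then show ?thesis using f g by (simp add: differentiable_mult smooth_imp_differentiable)
      next
        case (Suc m)
        have "deriv (\<lambda>x. f x * g x) = (\<lambda>x. deriv f x * g x + f x * deriv g x)"
          using f g by (intro ext) (simp add: smooth_imp_field_differentiable mult.commute)
        then have "(deriv ^^ n) (\<lambda>x. f x * g x) = (deriv ^^ m) (\<lambda>x. deriv f x * g x + f x * deriv g x)"
          using Suc by (metis comp_apply funpow_Suc_right)
        moreover have "(deriv ^^ k) (\<lambda>x. deriv f x * g x) differentiable (at x)"
          "(deriv ^^ k) (\<lambda>x. f x * deriv g x) differentiable (at x)" if "k \<le> m" for k x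
          using less Suc f g smooth_deriv that by auto
        ultimately show ?thesis
          by (subst (asm) deriv_funpow_add) (auto intro!: differentiable_add)
      qed
    qed
  qed
  from this[rule_format, OF assms] show ?thesis
    unfolding smooth_def by blast
qed

lemma smooth_cmult: "smooth f \<Longrightarrow> smooth (\<lambda>x. c * f x)"
  using smooth_mult[OF smooth_const] by blast

lemma smooth_diff: "smooth f \<Longrightarrow> smooth g \<Longrightarrow> smooth (\<lambda>x. f x - g x)"
  using smooth_add[of f "\<lambda>x. (-1) * g x"] smooth_cmult[of g "-1"] by simp

lemma deriv_funpow_affine:
  assumes "smooth f"
  shows "(deriv ^^ n) (\<lambda>x. f (a * x + b)) = (\<lambda>x. a ^ n * (deriv ^^ n) f (a * x + b))"
proof (induction n)
  case (Suc n)
  have "((\<lambda>x. a ^ n * (deriv ^^ n) f (a * x + b)) has_real_derivative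
          a ^ Suc n * (deriv ^^ Suc n) f (a * x + b)) (at x)" for x
  proof -
    have "((deriv ^^ n) f has_real_derivative (deriv ^^ Suc n) f (a * x + b)) (at (a * x + b))"
      using assms unfolding smooth_def by (simp add: DERIV_deriv_iff_real_differentiable)
    then have "((\<lambda>x. (deriv ^^ n) f (a * x + b)) has_real_derivative (deriv ^^ Suc n) f (a * x + b) * a) (at x)"
      by (rule DERIV_chain2) (auto intro!: derivative_eq_intros)
    from DERIV_cmult[OF this, of "a ^ n"] show ?thesis
      by (simp add: algebra_simps)
  qed
  then show ?case
    using Suc by (auto intro!: ext DERIV_imp_deriv)
qed simp

lemma smooth_affine:
  assumes "smooth f"
  shows "smooth (\<lambda>x. f (a * x + b))"
  unfolding smooth_def deriv_funpow_affine[OF assms]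
proof (intro allI differentiable_mult differentiable_const)
  fix n x
  have "(deriv ^^ n) f differentiable at (a * x + b)"
    using assms smooth_def by blast
  then show "(\<lambda>x. (deriv ^^ n) f (a * x + b)) differentiable at x"
    using differentiable_chain_at[of "\<lambda>x. a * x + b" x "(deriv ^^ n) f"] by (simp add: o_def)
qed

definition exp_recip :: "real poly \<Rightarrow> real \<Rightarrow> real" where
  "exp_recip q x = (if x > 0 then poly q (1 / x) * exp (- (1 / x)) else 0)"

text \<open>For x > 0 the derivative of q(1/x) exp(-1/x) is (q - q')(1/x) exp(-1/x) / x^2,
  so the family \<open>exp_recip\<close> is closed under differentiation.\<close>
definition exp_recip_dpoly :: "real poly \<Rightarrow> real poly" where
  "exp_recip_dpoly q = [:0, 0, 1:] * (q - pderiv q)"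

lemma tendsto_poly_mult_exp_neg_at_top:
  fixes q :: "real poly"
  shows "((\<lambda>t. poly q t * exp (- t)) \<longlongrightarrow> 0) at_top"
proof -
  have "((\<lambda>t. \<Sum>i\<le>degree q. coeff q i * (t ^ i / exp t)) \<longlongrightarrow> (\<Sum>i\<le>degree q. coeff q i * 0)) at_top"
    by (intro tendsto_sum tendsto_mult tendsto_const tendsto_power_div_exp_0)
  moreover have "(\<lambda>t. \<Sum>i\<le>degree q. coeff q i * (t ^ i / exp t)) = (\<lambda>t. poly q t * exp (- t))"
    by (rule ext) (simp add: poly_altdef exp_minus sum_distrib_right divide_inverse mult.assoc)
  ultimately show ?thesis by simp
qed

lemma tendsto_poly_recip_mult_exp_at_right_0:
  fixes q :: "real poly"
  shows "((\<lambda>h. poly q (1 / h) * exp (- (1 / h))) \<longlongrightarrow> 0) (at_right 0)"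
  using filterlim_compose[OF tendsto_poly_mult_exp_neg_at_top filterlim_inverse_at_top_right]
  by (simp add: inverse_eq_divide)

lemma exp_recip_has_real_derivative:
  "(exp_recip q has_real_derivative exp_recip (exp_recip_dpoly q) x) (at x)"
proof -
  consider "x > 0" | "x < 0" | "x = 0" by linarith
  then show ?thesis
  proof cases
    case 1
    have "((\<lambda>x. poly q (1 / x) * exp (- (1 / x))) has_real_derivative
        poly (pderiv q) (1 / x) * (- 1 / x\<^sup>2) * exp (- (1 / x)) + exp (- (1 / x)) * (1 / x\<^sup>2) * poly q (1 / x)) (at x)"
      using 1 by (auto intro!: derivative_eq_intros DERIV_chain2[OF poly_DERIV] simp: power2_eq_square)
    moreover have "poly (pderiv q) (1 / x) * (- 1 / x\<^sup>2) * exp (- (1 / x)) + exp (- (1 / x)) * (1 / x\<^sup>2) * poly q (1 / x)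
        = exp_recip (exp_recip_dpoly q) x"
      using 1 by (simp add: exp_recip_def exp_recip_dpoly_def poly_mult algebra_simps power2_eq_square)
    ultimately show ?thesis
      using 1 by (auto intro: has_field_derivative_transform_within_open[where S = "{0<..}"]
          simp: exp_recip_def)
  next
    case 2
    show ?thesis
      by (rule has_field_derivative_transform_within_open[where S = "{..<0}" and f = "\<lambda>_. 0"])
         (use 2 in \<open>auto simp: exp_recip_def\<close>)
  next
    case 3
    have "((\<lambda>y. (exp_recip q y - exp_recip q 0) / (y - 0)) \<longlongrightarrow> 0) (at 0)"
      unfolding filterlim_at_split
    proof
      show "((\<lambda>y. (exp_recip q y - exp_recip q 0) / (y - 0)) \<longlongrightarrow> 0) (at_left 0)"
        by (rule tendsto_eventually)
           (auto simp: eventually_at_left_field exp_recip_def intro!: exI[of _ "-1"])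
      have "\<forall>\<^sub>F y in at_right 0. poly (pCons 0 q) (1 / y) * exp (- (1 / y)) = (exp_recip q y - exp_recip q 0) / (y - 0)"
        by (rule eventually_mono[OF eventually_at_right_less]) (auto simp: exp_recip_def)
      with tendsto_poly_recip_mult_exp_at_right_0
      show "((\<lambda>y. (exp_recip q y - exp_recip q 0) / (y - 0)) \<longlongrightarrow> 0) (at_right 0)"
        by (rule Lim_transform_eventually)
    qed
    then show ?thesis
      using 3 by (simp add: has_field_derivative_iff exp_recip_def)
  qed
qed

lemma smooth_exp_recip: "smooth (exp_recip q)"
proof -
  have "(deriv ^^ n) (exp_recip q) = exp_recip ((exp_recip_dpoly ^^ n) q)" for n
    by (induction n) (auto simp: DERIV_imp_deriv[OF exp_recip_has_real_derivative])
  then show ?thesis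
    unfolding smooth_def real_differentiable_def using exp_recip_has_real_derivative by metis
qed

definition bump :: "real \<Rightarrow> real" where
  "bump x = exp_recip 1 (1 + x) * exp_recip 1 (1 - x)"

lemma smooth_bump: "smooth bump"
  using smooth_mult[OF smooth_affine[OF smooth_exp_recip, of 1 1 1]
      smooth_affine[OF smooth_exp_recip, of 1 "-1" 1]]
  unfolding bump_def by (simp add: add.commute)

lemma bump_nonneg: "bump x \<ge> 0"
  by (simp add: bump_def exp_recip_def)

lemma bump_pos: "\<bar>x\<bar> < 1 \<Longrightarrow> bump x > 0"
  by (simp add: bump_def exp_recip_def)

lemma bump_eq_0: "\<bar>x\<bar> \<ge> 1 \<Longrightarrow> bump x = 0"
  by (auto simp: bump_def exp_recip_def abs_if split: if_splits)

lemma test_fun_iff: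
  "test_fun a b \<phi> \<longleftrightarrow> smooth \<phi> \<and> (\<exists>c d. a < c \<and> c \<le> d \<and> d < b \<and> (\<forall>x. x \<notin> {c..d} \<longrightarrow> \<phi> x = 0))"
  unfolding test_fun_def smooth_def by simp

lemma test_fun_imp_smooth: "test_fun a b \<phi> \<Longrightarrow> smooth \<phi>"
  using test_fun_iff by blast

lemma deriv_eq_0_outside:
  fixes f :: "real \<Rightarrow> real"
  assumes "\<forall>x. x \<notin> {c..d} \<longrightarrow> f x = 0" "x \<notin> {c..d}"
  shows "deriv f x = 0"
proof -
  have "(f has_real_derivative 0) (at x)"
    by (rule has_field_derivative_transform_within_open[where S = "- {c..d}" and f = "\<lambda>_. 0"])
       (use assms in auto)
  then show ?thesis by (rule DERIV_imp_deriv)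
qed

lemma test_fun_continuous_on: "test_fun a b \<phi> \<Longrightarrow> continuous_on S \<phi>"
  using test_fun_imp_smooth smooth_imp_continuous_on by blast

lemma test_fun_deriv:
  assumes "test_fun a b \<phi>"
  shows "test_fun a b (deriv \<phi>)"
proof -
  obtain c d where cd: "a < c" "c \<le> d" "d < b" and \<phi>: "\<forall>x. x \<notin> {c..d} \<longrightarrow> \<phi> x = 0"
    using assms test_fun_iff by blast
  have "smooth (deriv \<phi>)"
    using assms by (intro smooth_deriv test_fun_imp_smooth)
  moreover have "\<forall>x. x \<notin> {c..d} \<longrightarrow> deriv \<phi> x = 0"
    using deriv_eq_0_outside[OF \<phi>] by blast
  ultimately show ?thesis
    unfolding test_fun_iff using cd by blast
qed

lemma test_fun_cmult:
  assumes "test_fun a b \<phi>"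
  shows "test_fun a b (\<lambda>x. k * \<phi> x)"
proof -
  obtain c d where cd: "a < c" "c \<le> d" "d < b" and \<phi>: "\<forall>x. x \<notin> {c..d} \<longrightarrow> \<phi> x = 0"
    using assms test_fun_iff by blast
  have "smooth (\<lambda>x. k * \<phi> x)"
    using assms by (intro smooth_cmult test_fun_imp_smooth)
  moreover have "\<forall>x. x \<notin> {c..d} \<longrightarrow> k * \<phi> x = 0"
    using \<phi> by simp
  ultimately show ?thesis
    unfolding test_fun_iff using cd by blast
qed

lemma test_fun_diff_cmult:
  assumes "test_fun a b \<theta>" "test_fun a b \<eta>"
  shows "test_fun a b (\<lambda>x. \<theta> x - k * \<eta> x)"
proof -
  obtain c d where "a < c" "c \<le> d" "d < b" and \<theta>: "\<forall>x. x \<notin> {c..d} \<longrightarrow> \<theta> x = 0"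
    using assms(1) test_fun_iff by blast
  moreover obtain c' d' where "a < c'" "c' \<le> d'" "d' < b" and \<eta>: "\<forall>x. x \<notin> {c'..d'} \<longrightarrow> \<eta> x = 0"
    using assms(2) test_fun_iff by blast
  moreover have "smooth (\<lambda>x. \<theta> x - k * \<eta> x)"
    using assms test_fun_imp_smooth smooth_diff smooth_cmult by blast
  moreover have "\<theta> x - k * \<eta> x = 0" if "x \<notin> {min c c'..max d d'}" for x
  proof -
    have "x \<notin> {c..d}" "x \<notin> {c'..d'}"
      using that by auto
    then show ?thesis using \<theta> \<eta> by simp
  qed
  ultimately show ?thesis
    unfolding test_fun_iff by (intro conjI exI[of _ "min c c'"] exI[of _ "max d d'"]) auto
qed

lemma test_fun_bump:
  assumes "r > 0" "a < y - r" "y + r < b"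
  shows "test_fun a b (\<lambda>x. bump ((x - y) / r))"
proof -
  have "smooth (\<lambda>x. bump ((1 / r) * x + (- y / r)))"
    by (rule smooth_affine[OF smooth_bump])
  moreover have "(1 / r) * x + (- y / r) = (x - y) / r" for x
    by (simp add: diff_divide_distrib)
  moreover have "bump ((x - y) / r) = 0" if "x \<notin> {y - r..y + r}" for x
    using that assms(1) by (intro bump_eq_0) (auto simp: abs_if field_simps)
  ultimately show ?thesis
    unfolding test_fun_iff using assms by (intro conjI exI[of _ "y - r"] exI[of _ "y + r"]) auto
qed

lemma test_fun_support:
  assumes "test_fun a b \<psi>"
  obtains c d where "a < c" "c < d" "d < b"
    "\<And>x. x \<notin> {c<..<d} \<Longrightarrow> \<psi> x = 0 \<and> deriv \<psi> x = 0 \<and> deriv (deriv \<psi>) x = 0"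
proof -
  obtain c d where cd: "a < c" "c \<le> d" "d < b" and \<psi>: "\<forall>x. x \<notin> {c..d} \<longrightarrow> \<psi> x = 0"
    using assms test_fun_iff by blast
  have \<psi>': "\<forall>x. x \<notin> {c..d} \<longrightarrow> deriv \<psi> x = 0"
    using deriv_eq_0_outside[OF \<psi>] by blast
  have "x \<notin> {c..d}" if "x \<notin> {(a + c) / 2<..<(d + b) / 2}" for x
    using that cd by auto
  then show ?thesis
    using that[of "(a + c) / 2" "(d + b) / 2"] cd \<psi> \<psi>' deriv_eq_0_outside[OF \<psi>'] by auto
qed

section \<open>The lemmas of du Bois-Reymond\<close>

lemma integral_pos_if_continuous_nonneg:
  fixes f :: "real \<Rightarrow> real"
  assumes "continuous_on {a..b} f" "\<And>x. x \<in> {a..b} \<Longrightarrow> f x \<ge> 0" "y \<in> {a<..<b}" "f y > 0"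
  shows "integral {a..b} f > 0"
proof -
  have "integral {a..b} f \<ge> 0"
    using assms(1,2) by (intro integral_nonneg integrable_continuous_real) auto
  moreover have "integral {a..b} f \<noteq> 0"
  proof
    assume "integral {a..b} f = 0"
    then have "(f has_integral 0) (cbox a b)"
      using integrable_continuous_real[OF assms(1)] by (metis box_real(2) integrable_integral)
    then have "f y = 0"
      using has_integral_0_cbox_imp_0[of a b f y] assms by (auto simp: box_real)
    with assms(4) show False by simp
  qed
  ultimately show ?thesis by simp
qed

lemma fundamental_lemma_calculus_of_variations:
  fixes H :: "real \<Rightarrow> real"
  assumes "continuous_on {a..b} H"
    and H: "\<forall>\<theta>. test_fun a b \<theta> \<longrightarrow> integral {a..b} (\<lambda>x. H x * \<theta> x) = 0"
    and y: "y \<in> {a<..<b}"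
  shows "H y = 0"
proof (rule ccontr)
  assume "H y \<noteq> 0"
  moreover have "y \<in> {a..b}"
    using y by simp
  ultimately obtain \<delta> where "\<delta> > 0" and \<delta>: "\<forall>x\<in>{a..b}. dist x y < \<delta> \<longrightarrow> dist (H x) (H y) < \<bar>H y\<bar>"
    using assms(1) unfolding continuous_on_iff by (meson zero_less_abs_iff)
  define r where "r = min \<delta> (min (y - a) (b - y)) / 2"
  have "r > 0" "2 * r \<le> \<delta>" "2 * r \<le> y - a" "2 * r \<le> b - y"
    using \<open>\<delta> > 0\<close> y unfolding r_def by auto
  then have r: "r > 0" "r < \<delta>" "a < y - r" "y + r < b"
    by linarith+
  define \<theta> where "\<theta> x = bump ((x - y) / r)" for x
  have \<theta>: "test_fun a b \<theta>"
    unfolding \<theta>_def using test_fun_bump[OF r(1,3,4)] .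
  have nonneg: "H y * (H x * \<theta> x) \<ge> 0" if "x \<in> {a..b}" for x
  proof (cases "\<bar>x - y\<bar> < r")
    case True
    then have "dist (H x) (H y) < \<bar>H y\<bar>"
      using \<delta> that r by (simp add: dist_real_def)
    then have "H y * H x \<ge> 0"
      unfolding dist_real_def by (smt (verit) mult_pos_pos mult_neg_neg)
    then show ?thesis
      using mult_nonneg_nonneg[OF _ bump_nonneg] by (simp add: \<theta>_def mult.assoc[symmetric])
  next
    case False
    then show ?thesis
      using r(1) by (simp add: \<theta>_def bump_eq_0 abs_div)
  qed
  have cont: "continuous_on {a..b} (\<lambda>x. H y * (H x * \<theta> x))"
    using assms(1) test_fun_continuous_on[OF \<theta>] by (intro continuous_intros)
  have pos: "H y * (H y * \<theta> y) > 0"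
  proof -
    have "H y * H y > 0"
      using \<open>H y \<noteq> 0\<close> by (metis not_real_square_gt_zero)
    moreover have "\<theta> y > 0"
      using bump_pos[of 0] by (simp add: \<theta>_def)
    ultimately show ?thesis by (metis mult.assoc mult_pos_pos)
  qed
  have "integral {a..b} (\<lambda>x. H y * (H x * \<theta> x)) > 0"
    by (rule integral_pos_if_continuous_nonneg[OF cont nonneg y pos])
  with H \<theta> show False by simp
qed

lemma exists_test_fun_integral_eq_1:
  fixes a b :: real
  assumes "a < b"
  obtains \<theta> where "test_fun a b \<theta>" "integral {a..b} \<theta> = 1"
proof -
  define y where "y = (a + b) / 2"
  define r where "r = (b - a) / 4"
  have r: "r > 0" "a < y - r" "y + r < b"
    using assms unfolding y_def r_def by (auto simp: field_simps)
  define \<theta> where "\<theta> x = bump ((x - y) / r)" for x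
  have \<theta>: "test_fun a b \<theta>"
    unfolding \<theta>_def using test_fun_bump[OF r] .
  have "integral {a..b} \<theta> > 0"
    using test_fun_continuous_on[OF \<theta>] r bump_nonneg bump_pos[of 0]
    by (intro integral_pos_if_continuous_nonneg[of _ _ _ y]) (auto simp: \<theta>_def)
  then have "integral {a..b} (\<lambda>x. 1 / integral {a..b} \<theta> * \<theta> x) = 1"
    by simp
  with test_fun_cmult[OF \<theta>] show ?thesis
    using that by blast
qed

lemma integral_eq_integral_support:
  fixes f :: "real \<Rightarrow> real"
  assumes "continuous_on {c..d} f" "\<forall>x. x \<notin> {c..d} \<longrightarrow> f x = 0" "{c..d} \<subseteq> {u..v}"
  shows "integral {u..v} f = integral {c..d} f"
proof -
  have "(f has_integral integral {c..d} f) {c..d}"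
    using integrable_continuous_real[OF assms(1)] by (rule integrable_integral)
  then have "(f has_integral integral {c..d} f) {u..v}"
    by (rule has_integral_on_superset) (use assms(2,3) in auto)
  then show ?thesis by (rule integral_unique)
qed

lemma integral_eq_0_outside_support:
  fixes \<zeta> :: "real \<Rightarrow> real"
  assumes "continuous_on {c..d} \<zeta>" "\<forall>x. x \<notin> {c..d} \<longrightarrow> \<zeta> x = 0"
    and "a < c" "d < b" "integral {a..b} \<zeta> = 0" "x \<notin> {c..d}"
  shows "integral {a..x} \<zeta> = 0"
proof (cases "x < c")
  case True
  then have "integral {a..x} \<zeta> = integral {a..x} (\<lambda>_. 0)"
    by (intro integral_cong) (use assms(2) in auto)
  then show ?thesis
    by simp
next
  case False
  then have "integral {a..x} \<zeta> = integral {c..d} \<zeta>"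
    using assms(3,6) by (intro integral_eq_integral_support[OF assms(1,2)]) auto
  also have "\<dots> = integral {a..b} \<zeta>"
    using assms(3,4) by (intro integral_eq_integral_support[OF assms(1,2), symmetric]) auto
  finally show ?thesis
    using assms(5) by simp
qed

lemma test_fun_antiderivative:
  assumes \<zeta>: "test_fun a b \<zeta>" and "integral {a..b} \<zeta> = 0"
  obtains \<phi> where "test_fun a b \<phi>" "deriv \<phi> = \<zeta>"
proof -
  obtain c d where cd: "a < c" "c \<le> d" "d < b" and \<zeta>0: "\<forall>x. x \<notin> {c..d} \<longrightarrow> \<zeta> x = 0"
    using \<zeta> test_fun_iff by blast
  have cont: "continuous_on S \<zeta>" for S
    using test_fun_continuous_on[OF \<zeta>] .
  define \<phi> where "\<phi> x = integral {a..x} \<zeta>" for x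
  have \<phi>0: "\<forall>x. x \<notin> {c..d} \<longrightarrow> \<phi> x = 0"
    unfolding \<phi>_def using integral_eq_0_outside_support[OF cont \<zeta>0 cd(1,3) assms(2)] by blast
  have \<phi>': "(\<phi> has_real_derivative \<zeta> x) (at x)" for x
  proof (cases "x > a")
    case True
    have "(\<phi> has_real_derivative \<zeta> x) (at x within {a..x + 1})"
      unfolding \<phi>_def by (rule integral_has_real_derivative[OF cont]) (use True in auto)
    then show ?thesis
      using True at_within_Icc_at[of a x "x + 1"] by auto
  next
    case False
    then have "x < c"
      using cd by simp
    have "((\<lambda>_. 0) has_real_derivative 0) (at x)"
      by simp
    then have "(\<phi> has_real_derivative 0) (at x)"
      by (rule has_field_derivative_transform_within_open[where S = "{..<c}"])
         (use \<open>x < c\<close> \<phi>0 in auto)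
    moreover have "\<zeta> x = 0"
      using \<open>x < c\<close> \<zeta>0 by auto
    ultimately show ?thesis by simp
  qed
  have "test_fun a b \<phi>"
    unfolding test_fun_iff using smooth_if_DERIV[OF \<phi>' test_fun_imp_smooth[OF \<zeta>]] cd \<phi>0 by blast
  moreover have "deriv \<phi> = \<zeta>"
    using \<phi>' DERIV_imp_deriv by blast
  ultimately show ?thesis using that by blast
qed

lemma test_fun_deriv_eq_sub_mean:
  assumes \<theta>\<^sub>0: "test_fun a b \<theta>\<^sub>0" "integral {a..b} \<theta>\<^sub>0 = 1" and \<omega>: "test_fun a b \<omega>"
  obtains \<phi> where "test_fun a b \<phi>" "deriv \<phi> = (\<lambda>x. \<omega> x - integral {a..b} \<omega> * \<theta>\<^sub>0 x)"
proof (rule test_fun_antiderivative)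
  show "test_fun a b (\<lambda>x. \<omega> x - integral {a..b} \<omega> * \<theta>\<^sub>0 x)"
    using test_fun_diff_cmult[OF \<omega> \<theta>\<^sub>0(1)] .
  have "(\<lambda>x. integral {a..b} \<omega> * \<theta>\<^sub>0 x) integrable_on {a..b}" "\<omega> integrable_on {a..b}"
    using test_fun_continuous_on[OF \<theta>\<^sub>0(1)] test_fun_continuous_on[OF \<omega>]
    by (auto intro!: integrable_continuous_real continuous_intros)
  then show "integral {a..b} (\<lambda>x. \<omega> x - integral {a..b} \<omega> * \<theta>\<^sub>0 x) = 0"
    using \<theta>\<^sub>0(2) by (simp add: integral_diff)
qed

lemma integral_by_parts_test_fun:
  fixes g g' :: "real \<Rightarrow> real"
  assumes "a \<le> b" and \<phi>: "test_fun a b \<phi>"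
    and g: "\<And>x. x \<in> {a..b} \<Longrightarrow> (g has_real_derivative g' x) (at x within {a..b})"
  shows "integral {a..b} (\<lambda>x. g x * deriv \<phi> x) = - integral {a..b} (\<lambda>x. g' x * \<phi> x)"
proof -
  obtain c d where "a < c" "d < b" and \<phi>0: "\<forall>x. x \<notin> {c..d} \<longrightarrow> \<phi> x = 0"
    using \<phi> test_fun_iff by blast
  then have "\<phi> a = 0" "\<phi> b = 0"
    by auto
  have "((\<lambda>x. g' x * \<phi> x + g x * deriv \<phi> x) has_integral (g b * \<phi> b - g a * \<phi> a)) {a..b}"
  proof (rule fundamental_theorem_of_calculus[OF \<open>a \<le> b\<close>])
    fix x
    assume "x \<in> {a..b}"
    have "(\<phi> has_real_derivative deriv \<phi> x) (at x within {a..b})"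
      using smooth_imp_DERIV[OF test_fun_imp_smooth[OF \<phi>]] by (rule has_field_derivative_at_within)
    from DERIV_mult[OF g[OF \<open>x \<in> {a..b}\<close>] this]
    show "((\<lambda>x. g x * \<phi> x) has_vector_derivative g' x * \<phi> x + g x * deriv \<phi> x) (at x within {a..b})"
      by (simp add: has_real_derivative_iff_has_vector_derivative[symmetric] mult.commute)
  qed
  then have total: "((\<lambda>x. g' x * \<phi> x + g x * deriv \<phi> x) has_integral 0) {a..b}"
    using \<open>\<phi> a = 0\<close> \<open>\<phi> b = 0\<close> by simp
  have "continuous_on {a..b} g"
    using g by (meson DERIV_continuous continuous_on_eq_continuous_within)
  then have "(\<lambda>x. g x * deriv \<phi> x) integrable_on {a..b}"
    using test_fun_continuous_on[OF test_fun_deriv[OF \<phi>]]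
    by (intro integrable_continuous_real continuous_on_mult)
  from has_integral_diff[OF total integrable_integral[OF this]]
  have "((\<lambda>x. g' x * \<phi> x) has_integral - integral {a..b} (\<lambda>x. g x * deriv \<phi> x)) {a..b}"
    by simp
  then show ?thesis
    by (simp add: integral_unique)
qed

lemma du_Bois_Reymond:
  fixes H :: "real \<Rightarrow> real"
  assumes "a < b" and H: "continuous_on {a..b} H"
    and weak: "\<forall>\<omega>. test_fun a b \<omega> \<longrightarrow> integral {a..b} (\<lambda>x. H x * deriv \<omega> x) = 0"
  obtains k where "\<forall>y\<in>{a<..<b}. H y = k"
proof -
  obtain \<theta>\<^sub>0 where \<theta>\<^sub>0: "test_fun a b \<theta>\<^sub>0" "integral {a..b} \<theta>\<^sub>0 = 1"
    using exists_test_fun_integral_eq_1[OF \<open>a < b\<close>] .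
  define k where "k = integral {a..b} (\<lambda>x. H x * \<theta>\<^sub>0 x)"
  have "integral {a..b} (\<lambda>x. (H x - k) * \<theta> x) = 0" if \<theta>: "test_fun a b \<theta>" for \<theta>
  proof -
    define m where "m = integral {a..b} \<theta>"
    obtain \<omega> where "test_fun a b \<omega>" "deriv \<omega> = (\<lambda>x. \<theta> x - m * \<theta>\<^sub>0 x)"
      using test_fun_deriv_eq_sub_mean[OF \<theta>\<^sub>0 \<theta>] unfolding m_def .
    then have "0 = integral {a..b} (\<lambda>x. H x * (\<theta> x - m * \<theta>\<^sub>0 x))"
      using weak by metis
    also have "\<dots> = integral {a..b} (\<lambda>x. H x * \<theta> x - m * (H x * \<theta>\<^sub>0 x))"
      by (simp add: algebra_simps)
    also have "\<dots> = integral {a..b} (\<lambda>x. H x * \<theta> x - k * \<theta> x)"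
      using H test_fun_continuous_on[OF \<theta>] test_fun_continuous_on[OF \<theta>\<^sub>0(1)]
      by (subst (1 2) integral_diff) (auto intro!: integrable_continuous_real continuous_intros
          simp: k_def m_def)
    finally show ?thesis
      by (simp add: algebra_simps)
  qed
  moreover have "continuous_on {a..b} (\<lambda>x. H x - k)"
    using H by (intro continuous_intros)
  ultimately have "H y - k = 0" if "y \<in> {a<..<b}" for y
    using fundamental_lemma_calculus_of_variations[of a b "\<lambda>x. H x - k"] that by blast
  then show ?thesis
    using that by auto
qed

lemma du_Bois_Reymond_second_order:
  fixes H :: "real \<Rightarrow> real"
  assumes "a < b" and H: "continuous_on {a..b} H"
    and weak: "\<forall>\<phi>. test_fun a b \<phi> \<longrightarrow> integral {a..b} (\<lambda>x. H x * deriv (deriv \<phi>) x) = 0"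
  obtains \<alpha> \<beta> where "\<forall>y\<in>{a<..<b}. H y = \<alpha> + \<beta> * y"
proof -
  obtain \<theta>\<^sub>0 where \<theta>\<^sub>0: "test_fun a b \<theta>\<^sub>0" "integral {a..b} \<theta>\<^sub>0 = 1"
    using exists_test_fun_integral_eq_1[OF \<open>a < b\<close>] .
  define k where "k = integral {a..b} (\<lambda>x. H x * deriv \<theta>\<^sub>0 x)"
  have "integral {a..b} (\<lambda>x. (H x + k * x) * deriv \<omega> x) = 0" if \<omega>: "test_fun a b \<omega>" for \<omega>
  proof -
    define m where "m = integral {a..b} \<omega>"
    obtain \<phi> where "test_fun a b \<phi>" "deriv \<phi> = (\<lambda>x. \<omega> x - m * \<theta>\<^sub>0 x)"
      using test_fun_deriv_eq_sub_mean[OF \<theta>\<^sub>0 \<omega>] unfolding m_def .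
    moreover have "deriv (\<lambda>x. \<omega> x - m * \<theta>\<^sub>0 x) = (\<lambda>x. deriv \<omega> x - m * deriv \<theta>\<^sub>0 x)"
      using \<omega> \<theta>\<^sub>0(1) by (intro ext DERIV_imp_deriv DERIV_diff DERIV_cmult smooth_imp_DERIV test_fun_imp_smooth)
    ultimately have "0 = integral {a..b} (\<lambda>x. H x * (deriv \<omega> x - m * deriv \<theta>\<^sub>0 x))"
      using weak by metis
    also have "\<dots> = integral {a..b} (\<lambda>x. H x * deriv \<omega> x - m * (H x * deriv \<theta>\<^sub>0 x))"
      by (simp add: algebra_simps)
    also have "\<dots> = integral {a..b} (\<lambda>x. H x * deriv \<omega> x) - m * k"
      using H test_fun_continuous_on[OF test_fun_deriv[OF \<omega>]] test_fun_continuous_on[OF test_fun_deriv[OF \<theta>\<^sub>0(1)]]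
      by (subst integral_diff) (auto intro!: integrable_continuous_real continuous_intros simp: k_def)
    finally have "integral {a..b} (\<lambda>x. H x * deriv \<omega> x) = m * k"
      by simp
    moreover have "integral {a..b} (\<lambda>x. x * deriv \<omega> x) = - m"
      using integral_by_parts_test_fun[of a b \<omega> "\<lambda>x. x" "\<lambda>_. 1"] \<open>a < b\<close> \<omega>
      by (simp add: m_def has_real_derivative_iff_has_vector_derivative)
    moreover have "integral {a..b} (\<lambda>x. (H x + k * x) * deriv \<omega> x)
        = integral {a..b} (\<lambda>x. H x * deriv \<omega> x) + k * integral {a..b} (\<lambda>x. x * deriv \<omega> x)"
      using H test_fun_continuous_on[OF test_fun_deriv[OF \<omega>]]
      by (simp add: distrib_right mult.assoc integral_add integrable_continuous_real continuous_intros)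
    ultimately show ?thesis
      by simp
  qed
  moreover have "continuous_on {a..b} (\<lambda>x. H x + k * x)"
    using H by (intro continuous_intros)
  ultimately obtain c where "\<forall>y\<in>{a<..<b}. H y + k * y = c"
    using du_Bois_Reymond[OF \<open>a < b\<close>, of "\<lambda>x. H x + k * x"] by blast
  then have "\<forall>y\<in>{a<..<b}. H y = c + (- k) * y"
    by (simp add: algebra_simps)
  then show ?thesis
    using that by blast
qed

lemma weak_second_order_imp_DERIV:
  fixes A B :: "real \<Rightarrow> real"
  assumes "a < b" and A: "continuous_on {a..b} A" and B: "continuous_on {a..b} B"
    and weak: "\<forall>\<phi>. test_fun a b \<phi> \<longrightarrow>
      integral {a..b} (\<lambda>x. A x * deriv (deriv \<phi>) x + B x * deriv \<phi> x) = 0"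
  obtains \<beta> where "\<And>x. x \<in> {a<..<b} \<Longrightarrow> (A has_real_derivative B x + \<beta>) (at x)"
proof -
  define G where "G x = integral {a..x} B" for x
  have G': "(G has_real_derivative B x) (at x within {a..b})" if "x \<in> {a..b}" for x
    unfolding G_def by (rule integral_has_real_derivative[OF B that])
  have G: "continuous_on {a..b} G"
    using G' by (meson DERIV_continuous continuous_on_eq_continuous_within)
  have "integral {a..b} (\<lambda>x. (A x - G x) * deriv (deriv \<phi>) x) = 0" if \<phi>: "test_fun a b \<phi>" for \<phi>
  proof -
    have cont: "continuous_on {a..b} (deriv \<phi>)" "continuous_on {a..b} (deriv (deriv \<phi>))"
      using test_fun_continuous_on test_fun_deriv \<phi> by blast+
    have "integral {a..b} (\<lambda>x. (A x - G x) * deriv (deriv \<phi>) x)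
        = integral {a..b} (\<lambda>x. A x * deriv (deriv \<phi>) x) - integral {a..b} (\<lambda>x. G x * deriv (deriv \<phi>) x)"
      using A G cont by (simp add: left_diff_distrib integral_diff integrable_continuous_real continuous_intros)
    moreover have "integral {a..b} (\<lambda>x. G x * deriv (deriv \<phi>) x) = - integral {a..b} (\<lambda>x. B x * deriv \<phi> x)"
      using integral_by_parts_test_fun[OF _ test_fun_deriv[OF \<phi>] G'] \<open>a < b\<close> by simp
    moreover have "integral {a..b} (\<lambda>x. A x * deriv (deriv \<phi>) x + B x * deriv \<phi> x)
        = integral {a..b} (\<lambda>x. A x * deriv (deriv \<phi>) x) + integral {a..b} (\<lambda>x. B x * deriv \<phi> x)"
      using A B cont by (intro integral_add integrable_continuous_real continuous_intros)
    ultimately show ?thesis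
      using weak \<phi> by simp
  qed
  moreover have "continuous_on {a..b} (\<lambda>x. A x - G x)"
    using A G by (intro continuous_intros)
  ultimately obtain \<alpha> \<beta> where affine: "\<forall>y\<in>{a<..<b}. A y - G y = \<alpha> + \<beta> * y"
    using du_Bois_Reymond_second_order[OF \<open>a < b\<close>, of "\<lambda>x. A x - G x"] by blast
  have "(A has_real_derivative B x + \<beta>) (at x)" if x: "x \<in> {a<..<b}" for x
  proof -
    have "(G has_real_derivative B x) (at x)"
      using G'[of x] x at_within_Icc_at[of a x b] by auto
    then have "((\<lambda>y. G y + (\<alpha> + \<beta> * y)) has_real_derivative B x + \<beta>) (at x)"
      by (auto intro!: derivative_eq_intros)
    then show ?thesis
      by (rule has_field_derivative_transform_within_open[OF _ open_greaterThanLessThan x])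
         (use affine in force)
  qed
  then show ?thesis
    using that by blast
qed

lemma integral_mult_deriv2_test_fun:
  fixes \<Phi> \<Psi> g :: "real \<Rightarrow> real"
  assumes \<Phi>': "\<And>\<sigma>. \<sigma> \<in> {a<..<b} \<Longrightarrow> (\<Phi> has_real_derivative \<Psi> \<sigma>) (at \<sigma>)"
    and \<Psi>': "\<And>\<sigma>. \<sigma> \<in> {a<..<b} \<Longrightarrow> (\<Psi> has_real_derivative g \<sigma>) (at \<sigma>)"
    and \<psi>: "test_fun a b \<psi>"
  shows "integral {a..b} (\<lambda>\<sigma>. \<Phi> \<sigma> * deriv (deriv \<psi>) \<sigma> - g \<sigma> * \<psi> \<sigma>) = 0"
proof -
  obtain c d where cd: "a < c" "c < d" "d < b"
    and \<psi>0: "\<And>x. x \<notin> {c<..<d} \<Longrightarrow> \<psi> x = 0 \<and> deriv \<psi> x = 0 \<and> deriv (deriv \<psi>) x = 0"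
    using test_fun_support[OF \<psi>] by blast
  have "((\<lambda>\<sigma>. \<Phi> \<sigma> * deriv (deriv \<psi>) \<sigma> - g \<sigma> * \<psi> \<sigma>) has_integral
      (\<Phi> d * deriv \<psi> d - \<Psi> d * \<psi> d) - (\<Phi> c * deriv \<psi> c - \<Psi> c * \<psi> c)) {c..d}"
  proof (rule fundamental_theorem_of_calculus)
    fix \<sigma>
    assume "\<sigma> \<in> {c..d}"
    then have \<sigma>: "\<sigma> \<in> {a<..<b}"
      using cd by auto
    have \<psi>: "(\<psi> has_real_derivative deriv \<psi> \<sigma>) (at \<sigma>)"
      "(deriv \<psi> has_real_derivative deriv (deriv \<psi>) \<sigma>) (at \<sigma>)"
      using smooth_imp_DERIV smooth_deriv test_fun_imp_smooth[OF \<psi>] by blast+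
    have "((\<lambda>\<sigma>. \<Phi> \<sigma> * deriv \<psi> \<sigma> - \<Psi> \<sigma> * \<psi> \<sigma>) has_real_derivative
        \<Phi> \<sigma> * deriv (deriv \<psi>) \<sigma> - g \<sigma> * \<psi> \<sigma>) (at \<sigma>)"
      using DERIV_diff[OF DERIV_mult[OF \<Phi>'[OF \<sigma>] \<psi>(2)] DERIV_mult[OF \<Psi>'[OF \<sigma>] \<psi>(1)]]
      by (simp add: algebra_simps)
    then show "((\<lambda>\<sigma>. \<Phi> \<sigma> * deriv \<psi> \<sigma> - \<Psi> \<sigma> * \<psi> \<sigma>) has_vector_derivative
        \<Phi> \<sigma> * deriv (deriv \<psi>) \<sigma> - g \<sigma> * \<psi> \<sigma>) (at \<sigma> within {c..d})"
      by (simp add: has_real_derivative_iff_has_vector_derivative[symmetric] has_field_derivative_at_within)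
  qed (use cd in simp)
  then have "((\<lambda>\<sigma>. \<Phi> \<sigma> * deriv (deriv \<psi>) \<sigma> - g \<sigma> * \<psi> \<sigma>) has_integral 0) {c..d}"
    using \<psi>0[of c] \<psi>0[of d] by simp
  then have "((\<lambda>\<sigma>. \<Phi> \<sigma> * deriv (deriv \<psi>) \<sigma> - g \<sigma> * \<psi> \<sigma>) has_integral 0) {a..b}"
    by (rule has_integral_on_superset) (use cd \<psi>0 in auto)
  then show ?thesis
    by (rule integral_unique)
qed

section \<open>Signed powers\<close>

lemma abs_powr_diff_2_mult_self: "\<bar>t\<bar> powr (p - 2) * t * t = \<bar>t::real\<bar> powr p"
proof (cases "t = 0")
  case False
  have "\<bar>t\<bar> powr p = \<bar>t\<bar> powr (p - 2) * \<bar>t\<bar> powr 2"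
    by (subst powr_add[symmetric]) simp
  then show ?thesis
    using False by (simp add: powr_numeral power2_eq_square)
qed simp

lemma abs_abs_powr_diff_2_mult: "\<bar>\<bar>t\<bar> powr (p - 2) * t\<bar> = \<bar>t::real\<bar> powr (p - 1)"
proof (cases "t = 0")
  case False
  have "\<bar>t\<bar> powr (p - 1) = \<bar>t\<bar> powr (p - 2) * \<bar>t\<bar> powr 1"
    by (subst powr_add[symmetric]) simp
  then show ?thesis
    using False by (simp add: abs_mult)
qed simp

lemma continuous_on_abs_powr_diff_2_mult:
  fixes f :: "'a::topological_space \<Rightarrow> real"
  assumes "p > 1" "continuous_on S f"
  shows "continuous_on S (\<lambda>x. \<bar>f x\<bar> powr (p - 2) * f x)"
proof -
  have "isCont (\<lambda>t::real. \<bar>t\<bar> powr (p - 2) * t) t" for t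
  proof (cases "t = 0")
    case True
    have "((\<lambda>h. \<bar>h\<bar> powr (p - 1)) \<longlongrightarrow> \<bar>0\<bar> powr (p - 1)) (at (0::real))"
      using assms(1) by (intro tendsto_intros) auto
    then have lim: "((\<lambda>h. \<bar>h\<bar> powr (p - 1)) \<longlongrightarrow> 0) (at (0::real))"
      by simp
    have "\<forall>h. norm (\<bar>h\<bar> powr (p - 2) * h) \<le> \<bar>h::real\<bar> powr (p - 1)"
      by (simp only: real_norm_def abs_abs_powr_diff_2_mult order_refl simp_thms)
    from Lim_null_comparison[OF always_eventually[OF this] lim] show ?thesis
      using True by (simp add: isCont_def)
  next
    case False
    then show ?thesis
      by (intro continuous_intros) auto
  qed
  then show ?thesis
    using continuous_on_compose2[OF continuous_at_imp_continuous_on assms(2)] by blast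
qed

lemma abs_powr_has_real_derivative:
  fixes r y :: real
  assumes "r > 1"
  shows "((\<lambda>y. \<bar>y\<bar> powr r) has_real_derivative r * sgn y * \<bar>y\<bar> powr (r - 1)) (at y)"
proof -
  consider "y > 0" | "y < 0" | "y = 0"
    by linarith
  then show ?thesis
  proof cases
    case 1
    have "((\<lambda>z. z powr r) has_real_derivative r * y powr (r - 1)) (at y)"
      using has_real_derivative_powr[OF 1] .
    moreover have "r * y powr (r - 1) = r * sgn y * \<bar>y\<bar> powr (r - 1)"
      using 1 by simp
    ultimately have "((\<lambda>z. z powr r) has_real_derivative r * sgn y * \<bar>y\<bar> powr (r - 1)) (at y)"
      by simp
    then show ?thesis
      by (rule has_field_derivative_transform_within_open[where S = "{0<..}"]) (use 1 in auto)
  next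
    case 2
    have "((\<lambda>z. (- z) powr r) has_real_derivative r * (- y) powr (r - 1) * (- 1)) (at y)"
      by (rule DERIV_chain2[where f = "\<lambda>z. z powr r" and g = "\<lambda>z. - z", OF has_real_derivative_powr])
         (use 2 in \<open>auto intro!: derivative_eq_intros\<close>)
    moreover have "r * (- y) powr (r - 1) * (- 1) = r * sgn y * \<bar>y\<bar> powr (r - 1)"
      using 2 by simp
    ultimately have "((\<lambda>z. (- z) powr r) has_real_derivative r * sgn y * \<bar>y\<bar> powr (r - 1)) (at y)"
      by simp
    then show ?thesis
      by (rule has_field_derivative_transform_within_open[where S = "{..<0}"]) (use 2 in auto)
  next
    case 3
    have "((\<lambda>h. \<bar>h\<bar> powr (r - 1)) \<longlongrightarrow> \<bar>0\<bar> powr (r - 1)) (at (0::real))"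
      using assms by (intro tendsto_intros) auto
    then have lim: "((\<lambda>h. \<bar>h\<bar> powr (r - 1)) \<longlongrightarrow> 0) (at (0::real))"
      by simp
    have "norm ((\<bar>h\<bar> powr r - \<bar>0\<bar> powr r) / (h - 0)) \<le> \<bar>h\<bar> powr (r - 1)" for h :: real
    proof (cases "h = 0")
      case False
      then have "\<bar>h\<bar> powr r = \<bar>h\<bar> powr (r - 1) * \<bar>h\<bar>"
        by (simp add: powr_diff)
      then show ?thesis
        using False by (simp add: abs_divide)
    qed simp
    from Lim_null_comparison[OF always_eventually[OF allI[OF this]] lim] show ?thesis
      using 3 assms by (simp add: has_field_derivative_iff)
  qed
qed

text \<open>Since |\<kappa>|^p = ||\<kappa>|^(p-2) \<kappa>|^(p/(p-1)) with p/(p-1) > 1, the power |\<kappa>|^p is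
  differentiable wherever |\<kappa>|^(p-2) \<kappa> is, even though \<kappa> itself need not be.\<close>
lemma abs_powr_has_real_derivative_if_signed:
  fixes k :: "real \<Rightarrow> real"
  assumes "p > 1" and "((\<lambda>y. \<bar>k y\<bar> powr (p - 2) * k y) has_real_derivative f') (at x)"
  shows "((\<lambda>y. \<bar>k y\<bar> powr p) has_real_derivative p / (p - 1) * k x * f') (at x)"
proof -
  define r where "r = p / (p - 1)"
  have r: "r > 1" "(p - 1) * r = p" "(p - 1) * (r - 1) = 1"
    using assms(1) by (auto simp: r_def field_simps)
  have abs_eq: "\<bar>\<bar>t\<bar> powr (p - 2) * t\<bar> powr s = \<bar>t\<bar> powr ((p - 1) * s)" for t s
    by (simp add: abs_abs_powr_diff_2_mult powr_powr)
  have "sgn (\<bar>t\<bar> powr (p - 2) * t) = sgn t" for t :: real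
    by (cases "t = 0") (auto simp: sgn_mult)
  then have sgn_eq: "r * sgn (\<bar>k x\<bar> powr (p - 2) * k x) * \<bar>\<bar>k x\<bar> powr (p - 2) * k x\<bar> powr (r - 1) = r * k x"
    by (simp add: abs_eq r(3) sgn_mult_abs)
  have fun_eq: "(\<lambda>y. \<bar>k y\<bar> powr p) = (\<lambda>y. \<bar>\<bar>k y\<bar> powr (p - 2) * k y\<bar> powr r)"
    by (simp add: abs_eq r(2))
  have "((\<lambda>y. \<bar>\<bar>k y\<bar> powr (p - 2) * k y\<bar> powr r) has_real_derivative r * k x * f') (at x)"
    using DERIV_chain2[OF abs_powr_has_real_derivative[OF r(1)] assms(2)] by (simp only: sgn_eq)
  then show ?thesis
    unfolding fun_eq r_def[symmetric] .
qed

section \<open>Graphs and their arc length\<close>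

lemma sobolev_W3_DERIV:
  assumes "sobolev_W3 q u u1 u2" "x \<in> {0<..<1}"
  shows "(u1 has_real_derivative u2 x) (at x)"
proof -
  have "(u1 has_real_derivative u2 x) (at x within {0..1})"
    using assms unfolding sobolev_W3_def by auto
  then show ?thesis
    using assms(2) at_within_Icc_at[of 0 x 1] by simp
qed

lemma sobolev_W3_continuous_on:
  assumes "sobolev_W3 q u u1 u2"
  shows "continuous_on {0..1} u1" "continuous_on {0..1} u2"
proof -
  show "continuous_on {0..1} u1"
    using assms unfolding sobolev_W3_def
    by (meson DERIV_continuous continuous_on_eq_continuous_within)
  obtain g where g: "set_integrable lborel {0..1} g"
    and u2: "\<forall>x\<in>{0..1}. u2 x = u2 0 + (LBINT t=0..x. g t)"
    using assms unfolding sobolev_W3_def by blast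
  have "continuous_on {0..1} (\<lambda>x. u2 0 + integral {0..x} g)"
    using set_borel_integral_eq_integral(1)[OF g]
    by (intro continuous_intros indefinite_integral_continuous_1)
  moreover have "u2 0 + integral {0..x} g = u2 x" if "x \<in> {0..1}" for x
  proof -
    have "set_integrable lborel {0..x} g"
      by (rule set_integrable_subset[OF g]) (use that in auto)
    then have "interval_lebesgue_integral lborel (ereal 0) (ereal x) g = integral {0..x} g"
      using that by (intro interval_integral_eq_integral) auto
    then show ?thesis
      using u2 that by (simp only: zero_ereal_def)
  qed
  ultimately show "continuous_on {0..1} u2"
    by (rule continuous_on_eq)
qed

lemma one_add_power2_gt_0 [simp]: "0 < 1 + (x::real)\<^sup>2"
  by (simp add: add_pos_nonneg)

lemma one_add_power2_neq_0 [simp]: "1 + (x::real)\<^sup>2 \<noteq> 0"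
  using one_add_power2_gt_0[of x] by linarith

lemma one_add_power2_has_real_derivative:
  "(f has_real_derivative f') (at x) \<Longrightarrow>
    ((\<lambda>y. 1 + (f y)\<^sup>2) has_real_derivative 2 * f x * f') (at x)"
  by (auto intro!: derivative_eq_intros)

lemma continuous_on_curv:
  "continuous_on S u1 \<Longrightarrow> continuous_on S u2 \<Longrightarrow> continuous_on S (curv u1 u2)"
  unfolding curv_def by (intro continuous_intros) auto

lemma curv_mult_eq: "curv u1 u2 x * (1 + (u1 x)\<^sup>2) * sqrt (1 + (u1 x)\<^sup>2) = u2 x"
proof -
  have "(1 + (u1 x)\<^sup>2) powr (3 / 2) = (1 + (u1 x)\<^sup>2) powr 1 * (1 + (u1 x)\<^sup>2) powr (1 / 2)"
    by (subst powr_add[symmetric]) simp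
  then have "(1 + (u1 x)\<^sup>2) powr (3 / 2) = (1 + (u1 x)\<^sup>2) * sqrt (1 + (u1 x)\<^sup>2)"
    by (simp add: powr_half_sqrt)
  then show ?thesis
    by (simp add: curv_def)
qed

lemma arclen_has_real_derivative:
  assumes "continuous_on {0..1} u1" "x \<in> {0..1}"
  shows "(arclen u1 has_real_derivative sqrt (1 + (u1 x)\<^sup>2)) (at x within {0..1})"
  unfolding arclen_def[abs_def]
  by (rule integral_has_real_derivative) (use assms in \<open>auto intro!: continuous_intros\<close>)

lemma arclen_strict_mono_on:
  assumes "continuous_on {0..1} u1"
  shows "strict_mono_on {0..1} (arclen u1)"
proof (rule strict_mono_onI)
  fix x y :: real
  assume "x \<in> {0..1}" "y \<in> {0..1}" "x < y"
  have "continuous_on {0..1} (arclen u1)"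
    using arclen_has_real_derivative[OF assms]
    by (meson DERIV_continuous continuous_on_eq_continuous_within)
  moreover have "\<exists>D. (arclen u1 has_real_derivative D) (at t) \<and> D > 0" if "t \<in> {0<..<1}" for t
    using arclen_has_real_derivative[OF assms, of t] that at_within_Icc_at[of 0 t 1] by auto
  ultimately show "arclen u1 x < arclen u1 y"
    using \<open>x \<in> {0..1}\<close> \<open>y \<in> {0..1}\<close>
    by (intro DERIV_pos_imp_increasing_open[OF \<open>x < y\<close>]) (auto intro: continuous_on_subset)
qed

lemma arclen_inverse_has_real_derivative:
  assumes u1: "continuous_on {0..1} u1" and "0 \<le> x1" "x1 < x2" "x2 \<le> 1"
    and \<sigma>: "\<sigma> \<in> {arclen u1 x1<..<arclen u1 x2}"
  defines "X \<equiv> the_inv_into {0..1} (arclen u1)"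
  shows "X \<sigma> \<in> {x1<..<x2}"
    and "(X has_real_derivative inverse (sqrt (1 + (u1 (X \<sigma>))\<^sup>2))) (at \<sigma>)"
proof -
  let ?s = "arclen u1"
  have sub: "{x1..x2} \<subseteq> {0..1}"
    using assms by auto
  have mono: "strict_mono_on {0..1} ?s"
    by (rule arclen_strict_mono_on[OF u1])
  have X: "X (?s x) = x" if "x \<in> {0..1}" for x
    unfolding X_def using the_inv_into_f_f[OF strict_mono_on_imp_inj_on[OF mono] that] .
  have s: "continuous_on {x1..x2} ?s"
    using arclen_has_real_derivative[OF u1] sub
    by (meson DERIV_continuous continuous_on_eq_continuous_within continuous_on_subset)
  have onto: "{?s x1..?s x2} \<subseteq> ?s ` {x1..x2}"
    using IVT'[of ?s x1 _ x2] s \<open>x1 < x2\<close> by fastforce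
  have inner: "X \<tau> \<in> {x1<..<x2} \<and> ?s (X \<tau>) = \<tau>" if "\<tau> \<in> {?s x1<..<?s x2}" for \<tau>
  proof -
    have "\<tau> \<in> ?s ` {x1..x2}"
      using onto that by auto
    then obtain x where x: "x \<in> {x1..x2}" "?s x = \<tau>"
      by blast
    then have "x \<noteq> x1" "x \<noteq> x2"
      using that by auto
    then show ?thesis
      using x X sub by auto
  qed
  then show "X \<sigma> \<in> {x1<..<x2}"
    using \<sigma> by blast
  have "continuous_on (?s ` {x1..x2}) X"
    using sub X by (intro continuous_on_inv[OF s compact_Icc]) auto
  then have "isCont X \<sigma>"
    using continuous_on_subset[OF _ onto] \<sigma> continuous_on_interior[of "{?s x1..?s x2}"] by auto
  moreover have "(?s has_real_derivative sqrt (1 + (u1 (X \<sigma>))\<^sup>2)) (at (X \<sigma>))"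
    using arclen_has_real_derivative[OF u1, of "X \<sigma>"] inner[OF \<sigma>] sub assms(2-4)
      at_within_Icc_at[of 0 "X \<sigma>" 1] by auto
  ultimately show "(X has_real_derivative inverse (sqrt (1 + (u1 (X \<sigma>))\<^sup>2))) (at \<sigma>)"
    using \<sigma> inner by (rule_tac DERIV_inverse_function[where f = ?s and a = "?s x1" and b = "?s x2"])
      auto
qed

lemma arclen_reparam_has_real_derivative:
  assumes "continuous_on {0..1} u1" "0 \<le> x1" "x1 < x2" "x2 \<le> 1"
    and f': "\<And>x. x \<in> {x1<..<x2} \<Longrightarrow> (f has_real_derivative sqrt (1 + (u1 x)\<^sup>2) * f' x) (at x)"
    and "\<sigma> \<in> {arclen u1 x1<..<arclen u1 x2}"
  defines "X \<equiv> the_inv_into {0..1} (arclen u1)"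
  shows "((\<lambda>\<sigma>. f (X \<sigma>)) has_real_derivative f' (X \<sigma>)) (at \<sigma>)"
proof -
  note X' = arclen_inverse_has_real_derivative[OF assms(1-4,6), folded X_def]
  have "((\<lambda>\<sigma>. f (X \<sigma>)) has_real_derivative
      sqrt (1 + (u1 (X \<sigma>))\<^sup>2) * f' (X \<sigma>) * inverse (sqrt (1 + (u1 (X \<sigma>))\<^sup>2))) (at \<sigma>)"
    by (rule DERIV_chain2[OF f'[OF X'(1)] X'(2)])
  then show ?thesis
    by (simp add: field_simps)
qed

section \<open>The Euler-Lagrange equation in arc length\<close>

lemma curv_weak_EL_imp_DERIV:
  fixes p a b :: real and u1 u2 :: "real \<Rightarrow> real"
  assumes "p > 1" "a < b" "continuous_on {a..b} u1" "continuous_on {a..b} u2"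
    and "\<forall>\<phi>. test_fun a b \<phi> \<longrightarrow>
      integral {a..b}
        (\<lambda>x. p * (\<bar>curv u1 u2 x\<bar> powr (p - 2) * curv u1 u2 x) / (1 + (u1 x)\<^sup>2) * deriv (deriv \<phi>) x
          + (1 - 3 * p) * (\<bar>curv u1 u2 x\<bar> powr p * u1 x) / sqrt (1 + (u1 x)\<^sup>2) * deriv \<phi> x) = 0"
  obtains \<beta> where "\<And>x. x \<in> {a<..<b} \<Longrightarrow>
    ((\<lambda>x. p * (\<bar>curv u1 u2 x\<bar> powr (p - 2) * curv u1 u2 x) / (1 + (u1 x)\<^sup>2)) has_real_derivative
      (1 - 3 * p) * (\<bar>curv u1 u2 x\<bar> powr p * u1 x) / sqrt (1 + (u1 x)\<^sup>2) + \<beta>) (at x)"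
proof (rule weak_second_order_imp_DERIV[OF \<open>a < b\<close> _ _ assms(5)])
  have \<kappa>: "continuous_on {a..b} (curv u1 u2)"
    using assms(3,4) by (rule continuous_on_curv)
  show "continuous_on {a..b} (\<lambda>x. p * (\<bar>curv u1 u2 x\<bar> powr (p - 2) * curv u1 u2 x) / (1 + (u1 x)\<^sup>2))"
    using \<kappa> assms(1,3) by (intro continuous_on_abs_powr_diff_2_mult continuous_intros) auto
  show "continuous_on {a..b} (\<lambda>x. (1 - 3 * p) * (\<bar>curv u1 u2 x\<bar> powr p * u1 x) / sqrt (1 + (u1 x)\<^sup>2))"
    using \<kappa> assms(1,3) by (intro continuous_on_powr' continuous_intros) auto
qed (use that in blast)

lemma curv_EL_first_derivative:
  fixes p \<beta> :: real and u1 u2 :: "real \<Rightarrow> real"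
  defines "\<kappa> \<equiv> curv u1 u2" and "w \<equiv> \<lambda>y. sqrt (1 + (u1 y)\<^sup>2)"
  assumes u1': "(u1 has_real_derivative u2 x) (at x)"
    and A': "((\<lambda>y. p * (\<bar>\<kappa> y\<bar> powr (p - 2) * \<kappa> y) / (1 + (u1 y)\<^sup>2)) has_real_derivative
      (1 - 3 * p) * (\<bar>\<kappa> x\<bar> powr p * u1 x) / w x + \<beta>) (at x)"
  shows "((\<lambda>y. p * (\<bar>\<kappa> y\<bar> powr (p - 2) * \<kappa> y)) has_real_derivative
    w x * (\<beta> * w x + (1 - p) * \<bar>\<kappa> x\<bar> powr p * u1 x)) (at x)"
proof -
  have fun_eq: "(\<lambda>y. p * (\<bar>\<kappa> y\<bar> powr (p - 2) * \<kappa> y) / (1 + (u1 y)\<^sup>2) * (1 + (u1 y)\<^sup>2))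
      = (\<lambda>y. p * (\<bar>\<kappa> y\<bar> powr (p - 2) * \<kappa> y))"
    by simp
  have alg: "((1 - 3 * p) * (P * v) / W + \<beta>) * W\<^sup>2 + 2 * v * (k * W\<^sup>2 * W) * (p * F / W\<^sup>2)
      = W * (\<beta> * W + (1 - p) * P * v)" if "W \<noteq> 0" "F * k = P" for W v k F P :: real
    using that(1) unfolding that(2)[symmetric] by (simp add: field_simps power2_eq_square)
  have u2: "u2 x = \<kappa> x * (w x)\<^sup>2 * w x" and w2: "1 + (u1 x)\<^sup>2 = (w x)\<^sup>2"
    using curv_mult_eq[of u1 u2 x] by (simp_all add: w_def \<kappa>_def)
  have "((1 - 3 * p) * (\<bar>\<kappa> x\<bar> powr p * u1 x) / w x + \<beta>) * (1 + (u1 x)\<^sup>2)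
      + 2 * u1 x * u2 x * (p * (\<bar>\<kappa> x\<bar> powr (p - 2) * \<kappa> x) / (1 + (u1 x)\<^sup>2))
      = w x * (\<beta> * w x + (1 - p) * \<bar>\<kappa> x\<bar> powr p * u1 x)"
    unfolding u2 w2 by (rule alg) (simp_all add: w_def abs_powr_diff_2_mult_self)
  with DERIV_mult[OF A' one_add_power2_has_real_derivative[OF u1']] show ?thesis
    unfolding fun_eq by simp
qed

lemma curv_EL_second_derivative:
  fixes p \<beta> :: real and u1 u2 :: "real \<Rightarrow> real"
  defines "\<kappa> \<equiv> curv u1 u2" and "w \<equiv> \<lambda>y. sqrt (1 + (u1 y)\<^sup>2)"
  assumes "p > 1" and u1': "(u1 has_real_derivative u2 x) (at x)"
    and F': "((\<lambda>y. p * (\<bar>\<kappa> y\<bar> powr (p - 2) * \<kappa> y)) has_real_derivative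
      w x * (\<beta> * w x + (1 - p) * \<bar>\<kappa> x\<bar> powr p * u1 x)) (at x)"
  shows "((\<lambda>y. \<beta> * w y + (1 - p) * \<bar>\<kappa> y\<bar> powr p * u1 y) has_real_derivative
    w x * ((1 - p) * \<kappa> x * \<bar>\<kappa> x\<bar> powr p)) (at x)"
proof -
  define D where "D = \<beta> * w x + (1 - p) * \<bar>\<kappa> x\<bar> powr p * u1 x"
  have "p \<noteq> 0"
    using \<open>p > 1\<close> by simp
  have w': "(w has_real_derivative inverse (w x) / 2 * (2 * u1 x * u2 x)) (at x)"
    unfolding w_def
    by (rule DERIV_chain2[OF DERIV_real_sqrt[OF one_add_power2_gt_0] one_add_power2_has_real_derivative[OF u1']])
  have "(\<lambda>y. 1 / p * (p * (\<bar>\<kappa> y\<bar> powr (p - 2) * \<kappa> y))) = (\<lambda>y. \<bar>\<kappa> y\<bar> powr (p - 2) * \<kappa> y)"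
    using \<open>p \<noteq> 0\<close> by simp
  with DERIV_cmult[OF F', of "1 / p"]
  have "((\<lambda>y. \<bar>\<kappa> y\<bar> powr (p - 2) * \<kappa> y) has_real_derivative w x * D / p) (at x)"
    unfolding D_def by simp
  from abs_powr_has_real_derivative_if_signed[OF \<open>p > 1\<close> this]
  have P': "((\<lambda>y. \<bar>\<kappa> y\<bar> powr p) has_real_derivative p / (p - 1) * \<kappa> x * (w x * D / p)) (at x)" .
  have fun_eq: "(\<lambda>y. \<beta> * w y + (1 - p) * (\<bar>\<kappa> y\<bar> powr p * u1 y))
      = (\<lambda>y. \<beta> * w y + (1 - p) * \<bar>\<kappa> y\<bar> powr p * u1 y)"
    by (simp add: mult.assoc)
  have alg: "\<beta> * (inverse W / 2 * (2 * v * (k * W\<^sup>2 * W)))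
      + (1 - p) * (p / (p - 1) * k * (W * (\<beta> * W + (1 - p) * P * v) / p) * v + k * W\<^sup>2 * W * P)
      = W * ((1 - p) * k * P)" if "W \<noteq> 0" "W\<^sup>2 = 1 + v\<^sup>2" for W v k P :: real
  proof -
    have "(1 - p) * (p / (p - 1) * k * (W * E / p) * v + R) = - k * W * E * v + (1 - p) * R" for E R
      using \<open>p > 1\<close> by (simp add: field_simps)
    moreover have "\<beta> * (inverse W / 2 * (2 * v * (k * W\<^sup>2 * W))) = \<beta> * v * k * W\<^sup>2"
      using that(1) by (simp add: field_simps power2_eq_square)
    ultimately have "?thesis \<longleftrightarrow> \<beta> * v * k * W\<^sup>2 + (- k * W * (\<beta> * W + (1 - p) * P * v) * v
        + (1 - p) * (k * W\<^sup>2 * W * P)) = W * ((1 - p) * k * P)"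
      by (simp only:)
    also have "\<dots> \<longleftrightarrow> (1 - p) * k * P * W * (W\<^sup>2 - (1 + v\<^sup>2)) = 0"
      by algebra
    finally show ?thesis
      using that(2) by simp
  qed
  have u2: "u2 x = \<kappa> x * (w x)\<^sup>2 * w x"
    using curv_mult_eq[of u1 u2 x] by (simp add: w_def \<kappa>_def)
  have "\<beta> * (inverse (w x) / 2 * (2 * u1 x * u2 x))
      + (1 - p) * (p / (p - 1) * \<kappa> x * (w x * D / p) * u1 x + u2 x * \<bar>\<kappa> x\<bar> powr p)
      = w x * ((1 - p) * \<kappa> x * \<bar>\<kappa> x\<bar> powr p)"
    unfolding u2 D_def by (rule alg) (simp_all add: w_def)
  with DERIV_add[OF DERIV_cmult[OF w', of \<beta>] DERIV_cmult[OF DERIV_mult[OF P' u1'], of "1 - p"]]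
  show ?thesis
    unfolding fun_eq by simp
qed

theorem lemma6p1:
  fixes p q x1 x2 :: real and u u1 u2 :: "real \<Rightarrow> real"
  assumes "p > 1" and "q > 1" and "sobolev_W3 q u u1 u2"
    and "0 \<le> x1" and "x1 < x2" and "x2 \<le> 1"
    and "\<forall>\<phi>. test_fun x1 x2 \<phi> \<longrightarrow>
           integral {x1..x2}
             (\<lambda>x. p * (\<bar>curv u1 u2 x\<bar> powr (p - 2) * curv u1 u2 x) / (1 + (u1 x)\<^sup>2)
                     * deriv (deriv \<phi>) x
                   + (1 - 3 * p) * (\<bar>curv u1 u2 x\<bar> powr p * u1 x) / sqrt (1 + (u1 x)\<^sup>2)
                     * deriv \<phi> x) = 0"
  shows "\<forall>\<psi>. test_fun (arclen u1 x1) (arclen u1 x2) \<psi> \<longrightarrow>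
           integral {arclen u1 x1..arclen u1 x2}
             (\<lambda>s. p * \<bar>curv_s u1 u2 s\<bar> powr (p - 2) * curv_s u1 u2 s * deriv (deriv \<psi>) s
                   + (p - 1) * \<bar>curv_s u1 u2 s\<bar> powr p * curv_s u1 u2 s * \<psi> s) = 0"
proof (intro allI impI)
  fix \<psi>
  assume \<psi>: "test_fun (arclen u1 x1) (arclen u1 x2) \<psi>"
  have cont: "continuous_on {0..1} u1" "continuous_on {0..1} u2"
    using sobolev_W3_continuous_on[OF assms(3)] .
  have u1': "(u1 has_real_derivative u2 x) (at x)" if "x \<in> {x1<..<x2}" for x
    using sobolev_W3_DERIV[OF assms(3)] that assms(4,6) by auto
  have sub: "{x1..x2} \<subseteq> {0..1}"
    using assms(4,6) by auto
  obtain \<beta> where "\<And>x. x \<in> {x1<..<x2} \<Longrightarrow>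
      ((\<lambda>x. p * (\<bar>curv u1 u2 x\<bar> powr (p - 2) * curv u1 u2 x) / (1 + (u1 x)\<^sup>2)) has_real_derivative
        (1 - 3 * p) * (\<bar>curv u1 u2 x\<bar> powr p * u1 x) / sqrt (1 + (u1 x)\<^sup>2) + \<beta>) (at x)"
    using curv_weak_EL_imp_DERIV[OF \<open>p > 1\<close> \<open>x1 < x2\<close> continuous_on_subset[OF cont(1) sub]
        continuous_on_subset[OF cont(2) sub] assms(7)] by blast
  note F' = curv_EL_first_derivative[OF u1' this]
  note D' = curv_EL_second_derivative[OF \<open>p > 1\<close> u1' F']
  have "integral {arclen u1 x1..arclen u1 x2}
      (\<lambda>\<sigma>. p * (\<bar>curv_s u1 u2 \<sigma>\<bar> powr (p - 2) * curv_s u1 u2 \<sigma>) * deriv (deriv \<psi>) \<sigma>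
        - (1 - p) * curv_s u1 u2 \<sigma> * \<bar>curv_s u1 u2 \<sigma>\<bar> powr p * \<psi> \<sigma>) = 0"
    unfolding curv_s_def
    by (rule integral_mult_deriv2_test_fun[OF arclen_reparam_has_real_derivative[OF cont(1) assms(4-6) F']
        arclen_reparam_has_real_derivative[OF cont(1) assms(4-6) D'] \<psi>])
  then show "integral {arclen u1 x1..arclen u1 x2}
      (\<lambda>s. p * \<bar>curv_s u1 u2 s\<bar> powr (p - 2) * curv_s u1 u2 s * deriv (deriv \<psi>) s
        + (p - 1) * \<bar>curv_s u1 u2 s\<bar> powr p * curv_s u1 u2 s * \<psi> s) = 0"
    by (simp add: algebra_simps)
qed

end
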